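(* Let $(k,R,t)\in\mathbb{R}^3$ with $R>0$, $t\neq 0$, $k\neq 0,1$. For a parameter $t$ let $c(t)=\frac{1-t^2}{1+t^2}$, $s(t)=\frac{2t}{1+t^2}$ and let $T_{k,R,t}=\{(x,y,z)\in\mathbb{R}^3: F_1=F_2=0\}$ with $$F_1=y^2-(xs(t)-yc(t))^2+2z-1,\qquad F_2=\bigl(x^2-2kz+R^2+k^2\bigr)^2-4R^2(x^2+y^2).$$ Then the trisectors $T_{k,R,t}$ and $T_{k,R,-t}$ are projectively equivalent (their projective closures in $\mathbb{P}^3$ are related by a projective linear transformation). In particular, the sign of $t$ does not affect the real projective topology of the trisector.
   Context: $T_{k,R,t}$ is the trisector of the $x$-axis $L_1$, the line $L_2$ through $(0,0,1)$ with direction $(c,s,0)$, and the circle of radius $R$ centered at $(0,0,k)$ in the plane $z=k$, defined as the common zero set of the two bisector polynomials above; its projective closure is obtained by homogenizing with $x=X/W$, $y=Y/W$, $z=Z/W$ and saturating with respect to $W$. *)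

theory Defs
  imports "HOL-Analysis.Analysis"
begin

text \<open>Rational parametrisation of the direction of the line L2.\<close>
definition cpar :: "real \<Rightarrow> real" where "cpar t = (1 - t^2) / (1 + t^2)"
definition spar :: "real \<Rightarrow> real" where "spar t = (2 * t) / (1 + t^2)"

text \<open>The two affine bisector polynomials (as functions on R^3).\<close>
definition F1 :: "real \<Rightarrow> real \<Rightarrow> real \<Rightarrow> real \<Rightarrow> real" where
  "F1 t x y z = y^2 - (x * spar t - y * cpar t)^2 + 2 * z - 1"
definition F2 :: "real \<Rightarrow> real \<Rightarrow> real \<Rightarrow> real \<Rightarrow> real \<Rightarrow> real" where
  "F2 k R x y z = (x^2 - 2 * k * z + R^2 + k^2)^2 - 4 * R^2 * (x^2 + y^2)"

definition trisector :: "real \<Rightarrow> real \<Rightarrow> real \<Rightarrow> (real \<times> real \<times> real) set" where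
  "trisector k R t = {(x, y, z). F1 t x y z = 0 \<and> F2 k R x y z = 0}"

text \<open>Polynomial functions in the homogeneous coordinates (X,Y,Z,W) = (v$1,v$2,v$3,v$4).
  Over the infinite field R these correspond bijectively to R[X,Y,Z,W].\<close>
inductive polyfun4 :: "(real^4 \<Rightarrow> real) \<Rightarrow> bool" where
  pf_const: "polyfun4 (\<lambda>v. c)"
| pf_coord: "polyfun4 (\<lambda>v. v $ i)"
| pf_add: "polyfun4 f \<Longrightarrow> polyfun4 g \<Longrightarrow> polyfun4 (\<lambda>v. f v + g v)"
| pf_mult: "polyfun4 f \<Longrightarrow> polyfun4 g \<Longrightarrow> polyfun4 (\<lambda>v. f v * g v)"

text \<open>Homogenisations (x = X/W, y = Y/W, z = Z/W) of F1 (degree 2) and F2 (degree 4).\<close>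
definition F1h :: "real \<Rightarrow> real^4 \<Rightarrow> real" where
  "F1h t v = (v$2)^2 - (v$1 * spar t - v$2 * cpar t)^2 + 2 * v$3 * v$4 - (v$4)^2"
definition F2h :: "real \<Rightarrow> real \<Rightarrow> real^4 \<Rightarrow> real" where
  "F2h k R v = ((v$1)^2 - 2 * k * v$3 * v$4 + (R^2 + k^2) * (v$4)^2)^2
               - 4 * R^2 * ((v$1)^2 + (v$2)^2) * (v$4)^2"

text \<open>Saturation (I : W^\<infinity>) of the ideal I = (F1h, F2h) in R[X,Y,Z,W].\<close>
definition sat_ideal :: "real \<Rightarrow> real \<Rightarrow> real \<Rightarrow> (real^4 \<Rightarrow> real) set" where
  "sat_ideal k R t = {G. polyfun4 G \<and>
     (\<exists>m::nat. \<exists>A B. polyfun4 A \<and> polyfun4 B \<and>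
        (\<forall>v. (v$4)^m * G v = A v * F1h t v + B v * F2h k R v))}"

text \<open>Projective closure of T_{k,R,t}: its (real) points in P^3, represented as the cone of
  nonzero homogeneous coordinate vectors on which every element of the saturation vanishes.\<close>
definition proj_closure :: "real \<Rightarrow> real \<Rightarrow> real \<Rightarrow> (real^4) set" where
  "proj_closure k R t = {v. v \<noteq> 0 \<and> (\<forall>G \<in> sat_ideal k R t. G v = 0)}"

end

theory Submission
  imports Defs
begin

text \<open>The reflection (X, Y, Z, W) \<mapsto> (-X, Y, Z, W) is the required transformation:
  F2h involves X only through X^2, and F1h t turns into F1h (-t) because s(-t) = -s(t) and
  c(-t) = c(t). A linear involution fixing W and carrying the generators F1h t, F2h of one ideal
  to those of the other maps the saturations onto each other by substitution, hence also their
  common zero sets. No hypothesis on k, R, t is needed.\<close>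

lemma polyfun4_sum:
  assumes "finite S" and "\<And>j. j \<in> S \<Longrightarrow> polyfun4 (f j)"
  shows "polyfun4 (\<lambda>v. \<Sum>j\<in>S. f j v)"
  using assms
proof (induction S rule: finite_induct)
  case empty
  show ?case using polyfun4.pf_const[of 0] by simp
next
  case (insert j S)
  then show ?case by (simp add: polyfun4.pf_add)
qed

lemma polyfun4_comp_linear:
  assumes "linear f" and "polyfun4 g"
  shows "polyfun4 (\<lambda>v. g (f v))"
  using assms(2)
proof (induction rule: polyfun4.induct)
  case (pf_coord i)
  have "f v $ i = (\<Sum>j\<in>UNIV. matrix f $ i $ j * v $ j)" for v
    by (subst matrix_vector_mul(2)[OF assms(1), symmetric]) (simp add: matrix_vector_mult_def)
  moreover have "polyfun4 (\<lambda>v. \<Sum>j\<in>UNIV. matrix f $ i $ j * v $ j)"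
    by (intro polyfun4_sum polyfun4.intros) simp
  ultimately show ?case by simp
qed (auto intro: polyfun4.intros)

lemma sat_ideal_comp_linear:
  assumes "linear f" and "\<And>v. f v $ 4 = v $ 4"
    and "\<And>v. F1h t (f v) = F1h t' v" and "\<And>v. F2h k R (f v) = F2h k' R' v"
    and "G \<in> sat_ideal k R t"
  shows "(\<lambda>v. G (f v)) \<in> sat_ideal k' R' t'"
proof -
  obtain m A B where "polyfun4 G" "polyfun4 A" "polyfun4 B"
    and G: "\<And>v. (v$4)^m * G v = A v * F1h t v + B v * F2h k R v"
    using assms(5) unfolding sat_ideal_def by blast
  moreover have "(v$4)^m * G (f v) = A (f v) * F1h t' v + B (f v) * F2h k' R' v" for v
    using G[of "f v"] by (simp only: assms(2-4))
  ultimately show ?thesis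
    unfolding sat_ideal_def using polyfun4_comp_linear[OF assms(1)] by blast
qed

lemma proj_closure_image_linear_involution:
  assumes "linear f" and f_f: "\<And>v. f (f v) = v" and f_W: "\<And>v. f v $ 4 = v $ 4"
    and F1h_f: "\<And>v. F1h t (f v) = F1h t' v" and F2h_f: "\<And>v. F2h k R (f v) = F2h k R v"
  shows "f ` proj_closure k R t = proj_closure k R t'"
proof -
  have maps_to: "f ` proj_closure k R a \<subseteq> proj_closure k R b"
    if F1h_ba: "\<And>v. F1h b (f v) = F1h a v" for a b
  proof
    fix w assume "w \<in> f ` proj_closure k R a"
    then obtain v where w: "w = f v" and v: "v \<in> proj_closure k R a" by blast
    have "f v \<noteq> 0"
    proof
      assume "f v = 0"
      then have "v = 0" using f_f linear_0[OF assms(1)] by metis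
      then show False using v by (simp add: proj_closure_def)
    qed
    moreover have "G (f v) = 0" if "G \<in> sat_ideal k R b" for G
    proof -
      have "(\<lambda>v. G (f v)) \<in> sat_ideal k R a"
        by (rule sat_ideal_comp_linear[OF assms(1) f_W F1h_ba F2h_f that])
      then show ?thesis using v unfolding proj_closure_def by fastforce
    qed
    ultimately show "w \<in> proj_closure k R b" by (simp add: proj_closure_def w)
  qed
  have "F1h t' (f v) = F1h t v" for v
    using F1h_f[of "f v"] by (simp add: f_f)
  then have "f ` proj_closure k R t \<subseteq> proj_closure k R t'"
    by (rule maps_to)
  moreover have "proj_closure k R t' \<subseteq> f ` proj_closure k R t"
  proof
    fix w assume "w \<in> proj_closure k R t'"
    then have "f w \<in> proj_closure k R t" using maps_to[OF F1h_f] by blast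
    then show "w \<in> f ` proj_closure k R t" by (metis f_f image_eqI)
  qed
  ultimately show ?thesis by (rule subset_antisym)
qed

lemma invertible_matrix_linear_involution:
  fixes f :: "real^'n \<Rightarrow> real^'n"
  assumes "linear f" and "\<And>v. f (f v) = v"
  shows "invertible (matrix f)"
proof -
  have "matrix f ** matrix f = mat 1"
    using matrix_compose[OF assms(1) assms(1)] assms(2) matrix_id_mat_1
    by (metis comp_apply eq_id_iff)
  then show ?thesis unfolding invertible_def by blast
qed

definition reflect_X :: "real^4 \<Rightarrow> real^4" where
  "reflect_X v = (\<chi> i. if i = 1 then - v $ i else v $ i)"

lemma reflect_X_nth [simp]:
  "reflect_X v $ 1 = - v $ 1" "reflect_X v $ 2 = v $ 2"
  "reflect_X v $ 3 = v $ 3" "reflect_X v $ 4 = v $ 4"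
  by (simp_all add: reflect_X_def)

lemma reflect_X_reflect_X [simp]: "reflect_X (reflect_X v) = v"
  by (simp add: vec_eq_iff reflect_X_def)

lemma linear_reflect_X: "linear reflect_X"
  by (rule linearI) (auto simp: vec_eq_iff reflect_X_def)

lemma F1h_reflect_X: "F1h t (reflect_X v) = F1h (-t) v"
  by (simp add: F1h_def spar_def cpar_def)

lemma F2h_reflect_X: "F2h k R (reflect_X v) = F2h k R v"
  by (simp add: F2h_def)

theorem lemma1:
  fixes k R t :: real
  assumes "R > 0" and "t \<noteq> 0" and "k \<noteq> 0" and "k \<noteq> 1"
  shows "\<exists>A :: real^4^4. invertible A \<and>
           (\<lambda>v. A *v v) ` proj_closure k R t = proj_closure k R (-t)"
proof (intro exI conjI)
  show "invertible (matrix reflect_X)"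
    by (rule invertible_matrix_linear_involution[OF linear_reflect_X reflect_X_reflect_X])
  have "(\<lambda>v. matrix reflect_X *v v) = reflect_X"
    by (rule matrix_vector_mul(2)[OF linear_reflect_X])
  then show "(\<lambda>v. matrix reflect_X *v v) ` proj_closure k R t = proj_closure k R (-t)"
    using proj_closure_image_linear_involution[OF linear_reflect_X reflect_X_reflect_X
        reflect_X_nth(4) F1h_reflect_X F2h_reflect_X] by simp
qed

end
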